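(* For every integer $n \geq 1$, $$P_O(n) - P_E(n) = \sum_{i \geq 1} S(i)\, p(n-i).$$
   Context: $p(m)$ is the number of partitions of $m$, with $p(0)=1$ and $p(m)=0$ for $m<0$. $P_O(n)$ (resp. $P_E(n)$) denotes the number of partitions of $n$ whose smallest part is odd (resp. even). The rank of a partition is its largest part minus its number of parts. For $i \geq 1$, $S(i)$ is the number of partitions of $i$ into distinct parts with even rank minus the number of partitions of $i$ into distinct parts with odd rank. *)

theory Defs
  imports Main "HOL-Library.Multiset"
begin

definition partitions :: "nat \<Rightarrow> nat multiset set" where
  "partitions m = {M. (\<forall>x\<in>#M. 0 < x) \<and> sum_mset M = m}"

definition p :: "int \<Rightarrow> int" where
  "p m = (if m < 0 then 0 else int (card (partitions (nat m))))"

definition P_O :: "nat \<Rightarrow> nat" where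
  "P_O n = card {M \<in> partitions n. M \<noteq> {#} \<and> odd (Min (set_mset M))}"

definition P_E :: "nat \<Rightarrow> nat" where
  "P_E n = card {M \<in> partitions n. M \<noteq> {#} \<and> even (Min (set_mset M))}"

definition distinct_partitions :: "nat \<Rightarrow> nat set set" where
  "distinct_partitions m = {A. finite A \<and> (\<forall>x\<in>A. 0 < x) \<and> \<Sum>A = m}"

definition rank_dp :: "nat set \<Rightarrow> int" where
  "rank_dp A = int (Max A) - int (card A)"

definition S :: "nat \<Rightarrow> int" where
  "S i = int (card {A \<in> distinct_partitions i. even (rank_dp A)})
       - int (card {A \<in> distinct_partitions i. odd (rank_dp A)})"

end

theory Submission
  imports Defs
begin

text \<open>
  Let p_ge(m, k) count the partitions of m into parts at least k. Sorting the partitions of n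
  by their smallest part k gives P_O(n) - P_E(n) = sum over k of (-1)^(k+1) p_ge(n - k, k).
  Deciding whether the part k occurs gives p_ge(m, k) = p_ge(m, k + 1) + p_ge(m - k, k), and
  unfolding this recursion is inclusion-exclusion:
  p_ge(m, k) = sum over B \<subseteq> {1..k-1} of (-1)^|B| p(m - \<Sum>B).
  Now {k} \<union> B is a partition into distinct parts with largest part k and rank k - |B| - 1,
  so the terms (-1)^(k+1) (-1)^|B| p(n - k - \<Sum>B) are exactly the contributions of the
  distinct partitions to the sum of S(i) p(n - i).
\<close>

lemma sum_Pow_insert:
  assumes "finite A" "a \<notin> A"
  shows "(\<Sum>B\<in>Pow (insert a A). f B) = (\<Sum>B\<in>Pow A. f B) + (\<Sum>B\<in>Pow A. f (insert a B))"
proof -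
  have "inj_on (insert a) (Pow A)"
    using assms(2) by (intro inj_onI) (metis PowD insert_ident subset_iff)
  then show ?thesis
    unfolding Pow_insert using assms
    by (subst sum.union_disjoint) (auto simp: sum.reindex)
qed

lemma sum_nonempty_subsets_by_Max:
  "(\<Sum>A\<in>Pow {1..n::nat} - {{}}. f A) = (\<Sum>k=1..n. \<Sum>B\<in>Pow {1..<k}. f (insert k B))"
proof (induction n)
  case (Suc n)
  have "{1..Suc n} = insert (Suc n) {1..n}" "{1..<Suc n} = {1..n}" by auto
  then have split: "Pow {1..Suc n} - {{}} = (Pow {1..n} - {{}}) \<union> insert (Suc n) ` Pow {1..<Suc n}"
    by (auto simp: Pow_insert)
  have "inj_on (insert (Suc n)) (Pow {1..<Suc n})"
    by (intro inj_onI) (metis PowD atLeastLessThan_iff insert_ident less_irrefl subsetD)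
  then have "(\<Sum>A\<in>Pow {1..Suc n} - {{}}. f A)
      = (\<Sum>A\<in>Pow {1..n} - {{}}. f A) + (\<Sum>B\<in>Pow {1..<Suc n}. f (insert (Suc n) B))"
    unfolding split by (subst sum.union_disjoint) (auto simp: sum.reindex)
  then show ?case
    using Suc.IH by simp
qed simp

lemma card_filter_minus_card_filter_not:
  assumes "finite X"
  shows "int (card {x\<in>X. P x}) - int (card {x\<in>X. \<not> P x}) = (\<Sum>x\<in>X. if P x then 1 else -1)"
  using assms by (simp add: sum.If_cases Int_def)

lemma member_le_sum_mset:
  fixes M :: "'a::canonically_ordered_monoid_add multiset"
  shows "x \<in># M \<Longrightarrow> x \<le> sum_mset M"
  using sum_mset.remove[of x M] le_iff_add by metis

lemma size_le_sum_mset: "\<forall>x\<in>#M. 0 < (x::nat) \<Longrightarrow> size M \<le> sum_mset M"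
  by (induction M) auto

lemma finite_partitions: "finite (partitions m)"
proof (rule finite_subset)
  show "partitions m \<subseteq> (\<Union>s\<le>m. multisets_of_size {1..m} s)"
  proof
    fix M assume "M \<in> partitions m"
    then have pos: "\<forall>x\<in>#M. 0 < x" and sum: "sum_mset M = m"
      by (auto simp: partitions_def)
    then have "set_mset M \<subseteq> {1..m}"
      using member_le_sum_mset[of _ M] by (auto simp: Suc_le_eq)
    moreover have "size M \<le> m"
      using size_le_sum_mset[OF pos] sum by simp
    ultimately show "M \<in> (\<Union>s\<le>m. multisets_of_size {1..m} s)"
      by (auto simp: multisets_of_size_def)
  qed
qed auto

definition partitions_ge :: "nat \<Rightarrow> nat \<Rightarrow> nat multiset set" where
  "partitions_ge m k = {M \<in> partitions m. \<forall>x\<in>#M. k \<le> x}"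

definition p_ge :: "int \<Rightarrow> nat \<Rightarrow> int" where
  "p_ge m k = (if m < 0 then 0 else int (card (partitions_ge (nat m) k)))"

lemma finite_partitions_ge: "finite (partitions_ge m k)"
  unfolding partitions_ge_def using finite_partitions by simp

lemma p_ge_1: "p_ge m 1 = p m"
proof -
  have "partitions_ge m 1 = partitions m" for m
    by (auto simp: partitions_ge_def partitions_def Suc_le_eq)
  then show ?thesis
    by (simp add: p_ge_def p_def)
qed

lemma partitions_ge_with_part:
  assumes "0 < k" "k \<le> m"
  shows "{M \<in> partitions_ge m k. k \<in># M} = add_mset k ` partitions_ge (m - k) k"
proof (intro equalityI subsetI)
  fix M assume M: "M \<in> {M \<in> partitions_ge m k. k \<in># M}"
  then have "k \<in># M" by simp
  then have "M = add_mset k (M - {#k#})" and "sum_mset M = k + sum_mset (M - {#k#})"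
    using sum_mset.remove by auto
  moreover have "M - {#k#} \<in> partitions_ge (m - k) k"
    using M calculation(2) by (auto simp: partitions_ge_def partitions_def dest: in_diffD)
  ultimately show "M \<in> add_mset k ` partitions_ge (m - k) k"
    by blast
qed (use assms in \<open>auto simp: partitions_ge_def partitions_def\<close>)

lemma card_partitions_ge_with_part:
  assumes "0 < k"
  shows "int (card {M \<in> partitions_ge m k. k \<in># M}) = p_ge (int m - int k) k"
proof (cases "k \<le> m")
  case True
  then show ?thesis
    using partitions_ge_with_part[OF assms True]
    by (simp add: p_ge_def card_image inj_on_def nat_diff_distrib)
next
  case False
  then have "{M \<in> partitions_ge m k. k \<in># M} = {}"
    using member_le_sum_mset[of k] by (fastforce simp: partitions_ge_def partitions_def)
  then show ?thesis
    using False by (simp only: p_ge_def card.empty) simp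
qed

lemma p_ge_rec:
  assumes "0 < k"
  shows "p_ge m k = p_ge m (Suc k) + p_ge (m - int k) k"
proof (cases "m < 0")
  case False
  have "partitions_ge (nat m) k
      = partitions_ge (nat m) (Suc k) \<union> {M \<in> partitions_ge (nat m) k. k \<in># M}"
    by (auto simp: partitions_ge_def Suc_le_eq order_le_less)
  moreover have "partitions_ge (nat m) (Suc k) \<inter> {M \<in> partitions_ge (nat m) k. k \<in># M} = {}"
    by (auto simp: partitions_ge_def)
  ultimately have "card (partitions_ge (nat m) k)
      = card (partitions_ge (nat m) (Suc k)) + card {M \<in> partitions_ge (nat m) k. k \<in># M}"
    by (metis (no_types, lifting) card_Un_disjoint finite_partitions_ge finite_Un)
  with False show ?thesis
    using card_partitions_ge_with_part[OF assms, of "nat m"] by (simp add: p_ge_def)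
qed (simp add: p_ge_def)

lemma p_ge_inclusion_exclusion:
  assumes "0 < k"
  shows "p_ge m k = (\<Sum>B\<in>Pow {1..<k}. (-1) ^ card B * p (m - int (\<Sum>B)))"
  using assms
proof (induction k arbitrary: m rule: nat_induct_non_zero)
  case 1
  then show ?case using p_ge_1 by simp
next
  case (Suc k)
  have "{1..<Suc k} = insert k {1..<k}" using Suc.hyps by auto
  moreover have "(-1) ^ card (insert k B) * p (m - int (\<Sum>(insert k B)))
      = - ((-1) ^ card B * p (m - int k - int (\<Sum>B)))" if "B \<in> Pow {1..<k}" for B
  proof -
    have "finite B" "k \<notin> B" using that finite_subset[of B "{1..<k}"] by auto
    then show ?thesis by (simp add: algebra_simps)
  qed
  ultimately show ?case
    using Suc.IH[of m] Suc.IH[of "m - int k"] p_ge_rec[OF Suc.hyps, of m]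
    by (simp add: sum_Pow_insert sum_negf)
qed

lemma partitions_Min_eq:
  assumes "0 < n"
  shows "{M \<in> partitions n. Min (set_mset M) = k} = {M \<in> partitions_ge n k. k \<in># M}"
proof -
  have "M \<noteq> {#}" if "M \<in> partitions n" for M
    using that assms by (auto simp: partitions_def)
  then show ?thesis
    by (auto simp: partitions_ge_def Min_eq_iff)
qed

lemma P_O_minus_P_E:
  assumes "0 < n"
  shows "int (P_O n) - int (P_E n) = (\<Sum>k=1..n. (-1) ^ (k + 1) * p_ge (int n - int k) k)"
proof -
  let ?min = "\<lambda>M. Min (set_mset M)"
  have nonempty: "M \<noteq> {#}" if "M \<in> partitions n" for M
    using that assms by (auto simp: partitions_def)
  have min_range: "?min ` partitions n \<subseteq> {1..n}"
  proof
    fix k assume "k \<in> ?min ` partitions n"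
    then obtain M where M: "M \<in> partitions n" "k = ?min M" by blast
    then have "k \<in># M" using nonempty[OF M(1)] by simp
    then show "k \<in> {1..n}"
      using M member_le_sum_mset[of k M] by (auto simp: partitions_def Suc_le_eq)
  qed
  have "P_O n = card {M \<in> partitions n. odd (?min M)}"
    and "P_E n = card {M \<in> partitions n. \<not> odd (?min M)}"
    unfolding P_O_def P_E_def using nonempty by metis+
  then have "int (P_O n) - int (P_E n) = (\<Sum>M\<in>partitions n. if odd (?min M) then 1 else -1)"
    using card_filter_minus_card_filter_not[OF finite_partitions, of n "\<lambda>M. odd (?min M)"]
    by simp
  also have "\<dots> = (\<Sum>k=1..n. \<Sum>M\<in>{M \<in> partitions n. ?min M = k}. if odd (?min M) then 1 else -1)"
    by (rule sum.group[symmetric, OF finite_partitions finite_atLeastAtMost min_range])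
  also have "\<dots> = (\<Sum>k=1..n. (-1) ^ (k + 1) * int (card {M \<in> partitions n. ?min M = k}))"
    by (intro sum.cong) auto
  also have "\<dots> = (\<Sum>k=1..n. (-1) ^ (k + 1) * p_ge (int n - int k) k)"
    using card_partitions_ge_with_part by (simp add: partitions_Min_eq[OF assms])
  finally show ?thesis .
qed

definition rank_sign :: "nat set \<Rightarrow> int" where
  "rank_sign A = (if even (rank_dp A) then 1 else -1)"

lemma rank_sign_insert_Max:
  assumes "B \<subseteq> {1..<k}"
  shows "rank_sign (insert k B) = (-1) ^ (k + 1) * (-1) ^ card B"
proof -
  have "finite B" "k \<notin> B"
    using assms finite_subset by auto
  moreover have "Max (insert k B) = k"
    using assms calculation by (auto intro!: Max_eqI)
  ultimately have "rank_dp (insert k B) = int (k + card B + 1) - 2 * int (card B + 1)"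
    by (simp add: rank_dp_def)
  then have "even (rank_dp (insert k B)) \<longleftrightarrow> even (k + card B + 1)"
    by simp
  then show ?thesis
    by (simp add: rank_sign_def power_add[symmetric] neg_one_even_power neg_one_odd_power)
qed

lemma distinct_partitions_subset_Pow: "distinct_partitions i \<subseteq> Pow {1..i}"
  using member_le_sum[of _ _ id] by (fastforce simp: distinct_partitions_def Suc_le_eq)

lemma finite_distinct_partitions: "finite (distinct_partitions i)"
  using distinct_partitions_subset_Pow finite_subset by blast

lemma S_eq_sum_rank_sign: "S i = (\<Sum>A\<in>distinct_partitions i. rank_sign A)"
  using card_filter_minus_card_filter_not[OF finite_distinct_partitions, of i "\<lambda>A. even (rank_dp A)"]
  by (simp add: S_def rank_sign_def)

lemma sum_S_times_p:
  "(\<Sum>i=1..n. S i * p (int n - int i)) = (\<Sum>A\<in>Pow {1..n} - {{}}. rank_sign A * p (int n - int (\<Sum>A)))"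
proof -
  let ?f = "\<lambda>A. rank_sign A * p (int n - int (\<Sum>A))"
  have "(\<Sum>i=1..n. S i * p (int n - int i)) = (\<Sum>i=1..n. \<Sum>A\<in>distinct_partitions i. ?f A)"
    unfolding S_eq_sum_rank_sign sum_distrib_right
    by (intro sum.cong refl) (simp add: distinct_partitions_def)
  also have "\<dots> = (\<Sum>A\<in>(\<Union>i\<in>{1..n}. distinct_partitions i). ?f A)"
  proof (rule sum.UNION_disjoint[symmetric])
    show "\<forall>i\<in>{1..n}. \<forall>j\<in>{1..n}. i \<noteq> j \<longrightarrow> distinct_partitions i \<inter> distinct_partitions j = {}"
      unfolding distinct_partitions_def by blast
  qed (simp_all add: finite_distinct_partitions)
  also have "\<dots> = (\<Sum>A\<in>Pow {1..n} - {{}}. ?f A)"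
  proof (rule sum.mono_neutral_left)
    show "(\<Union>i\<in>{1..n}. distinct_partitions i) \<subseteq> Pow {1..n} - {{}}"
    proof
      fix A assume "A \<in> (\<Union>i\<in>{1..n}. distinct_partitions i)"
      then obtain i where i: "i \<in> {1..n}" "A \<in> distinct_partitions i" by blast
      have "\<Sum>A = i"
        using i(2) by (simp add: distinct_partitions_def)
      then have "A \<subseteq> {1..i}" "A \<noteq> {}"
        using distinct_partitions_subset_Pow[of i] i by auto
      with i show "A \<in> Pow {1..n} - {{}}" by auto
    qed
    show "\<forall>A\<in>Pow {1..n} - {{}} - (\<Union>i\<in>{1..n}. distinct_partitions i). ?f A = 0"
    proof
      fix A assume A: "A \<in> Pow {1..n} - {{}} - (\<Union>i\<in>{1..n}. distinct_partitions i)"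
      then have "finite A" "A \<noteq> {}" "\<forall>x\<in>A. 0 < x"
        using finite_subset[of A "{1..n}"] by auto
      then have "0 < \<Sum>A" "A \<in> distinct_partitions (\<Sum>A)"
        by (simp_all add: sum_pos distinct_partitions_def)
      with A have "\<Sum>A \<notin> {1..n}" by (metis DiffD2 UN_I)
      \<comment> \<open>so \<open>\<Sum>A > n\<close>, and \<open>p\<close> vanishes at negative arguments\<close>
      then show "?f A = 0" using \<open>0 < \<Sum>A\<close> by (simp add: p_def del: of_nat_sum)
    qed
  qed simp
  finally show ?thesis .
qed

lemma signed_p_ge_eq_sum_rank_sign:
  assumes "0 < k"
  shows "(-1) ^ (k + 1) * p_ge (m - int k) k
    = (\<Sum>B\<in>Pow {1..<k}. rank_sign (insert k B) * p (m - int (\<Sum>(insert k B))))"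
  unfolding p_ge_inclusion_exclusion[OF assms] sum_distrib_left
proof (intro sum.cong refl)
  fix B assume "B \<in> Pow {1..<k}"
  moreover from this have "finite B" "k \<notin> B"
    using finite_subset by auto
  ultimately show "(-1) ^ (k + 1) * ((-1) ^ card B * p (m - int k - int (\<Sum>B)))
      = rank_sign (insert k B) * p (m - int (\<Sum>(insert k B)))"
    by (simp add: rank_sign_insert_Max algebra_simps)
qed

theorem theorem4:
  fixes n :: nat
  assumes "n \<ge> 1"
  shows "int (P_O n) - int (P_E n) = (\<Sum>i = 1..n. S i * p (int n - int i))"
proof -
  have "int (P_O n) - int (P_E n) = (\<Sum>k=1..n. (-1) ^ (k + 1) * p_ge (int n - int k) k)"
    using P_O_minus_P_E assms by simp
  also have "\<dots> = (\<Sum>k=1..n. \<Sum>B\<in>Pow {1..<k}.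
      rank_sign (insert k B) * p (int n - int (\<Sum>(insert k B))))"
    by (intro sum.cong refl signed_p_ge_eq_sum_rank_sign) simp
  also have "\<dots> = (\<Sum>A\<in>Pow {1..n} - {{}}. rank_sign A * p (int n - int (\<Sum>A)))"
    by (rule sum_nonempty_subsets_by_Max[symmetric])
  also have "\<dots> = (\<Sum>i = 1..n. S i * p (int n - int i))"
    by (rule sum_S_times_p[symmetric])
  finally show ?thesis .
qed

end
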